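(* Let $f\in S$ be nonzero. Then, inside $\mathrm{Der}_{\mathbb K}(S^h)$, $$D(f^h)\cap S^h\langle\partial_{x_1},\dots,\partial_{x_n}\rangle=D(f)^h.$$
   Context: $\mathbb K$ a field of characteristic zero, $S=\mathbb K[x_1,\dots,x_n]$, $S^h=\mathbb K[x_1,\dots,x_n,h]$ with the standard grading by total degree. For any polynomial ring $R$ over $\mathbb K$, $\mathrm{Der}_{\mathbb K}(R)$ is the free $R$-module on the partial derivatives; for $g\in R$, $e\ge1$, $D(g;e)=\{\delta:\delta(g)\in g^eR\}$, and for nonzero $F=cF_1^{e_1}\cdots F_r^{e_r}$ (pairwise non-associate irreducibles, $c\in\mathbb K^*$), $D(F)=\bigcap_iD(F_i;e_i)$; this defines $D(f)\subseteq\mathrm{Der}_{\mathbb K}(S)$ and $D(f^h)\subseteq\mathrm{Der}_{\mathbb K}(S^h)$ (basis $\partial_{x_1},\dots,\partial_{x_n},\partial_h$). For nonzero $g\in S$ of degree $e$, $g^h=h^e g(x_1/h,\dots,x_n/h)$. For nonzero $\delta=\sum_{i=1}^n a_i\partial_{x_i}\in\mathrm{Der}_{\mathbb K}(S)$ with $e=\max_i\deg a_i$, $\delta^h=\sum_{a_i\neq0}h^{e-\deg a_i}a_i^h\,\partial_{x_i}$. $D(f)^h$ is the $S^h$-submodule of $S^h\langle\partial_{x_1},\dots,\partial_{x_n}\rangle$ generated by $\{\delta^h:\ 0\ne\delta\in D(f)\}$. *)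

theory Defs
  imports "HOL-Library.Poly_Mapping"
begin

(* Polynomials over a field 'k in the variables indexed by nat: a monomial is
  a finitely supported exponent vector (nat \<Rightarrow>\<^sub>0 nat), a polynomial a finitely
  supported coefficient function on monomials.
  For S = K[x_0,...,x_(n-1)] we use N = n; for S^h we use N = Suc n, the
  homogenizing variable h being the variable with index n. *)

type_synonym 'k mpoly = "(nat \<Rightarrow>\<^sub>0 nat) \<Rightarrow>\<^sub>0 'k"

definition polys :: "nat \<Rightarrow> 'k::field mpoly set" where
  "polys N = {p. \<forall>m\<in>Poly_Mapping.keys p. Poly_Mapping.keys m \<subseteq> {..<N}}"

definition var :: "nat \<Rightarrow> 'k::field mpoly" where
  "var i = Poly_Mapping.single (Poly_Mapping.single i 1) 1"

definition dvd_in :: "nat \<Rightarrow> 'k::field mpoly \<Rightarrow> 'k mpoly \<Rightarrow> bool" where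
  "dvd_in N a b \<longleftrightarrow> (\<exists>r\<in>polys N. b = a * r)"

definition unit_in :: "nat \<Rightarrow> 'k::field mpoly \<Rightarrow> bool" where
  "unit_in N u \<longleftrightarrow> u \<in> polys N \<and> (\<exists>v\<in>polys N. u * v = 1)"

definition irreducible_in :: "nat \<Rightarrow> 'k::field mpoly \<Rightarrow> bool" where
  "irreducible_in N p \<longleftrightarrow> p \<in> polys N \<and> p \<noteq> 0 \<and> \<not> unit_in N p \<and>
     (\<forall>a\<in>polys N. \<forall>b\<in>polys N. p = a * b \<longrightarrow> unit_in N a \<or> unit_in N b)"

definition mult_in :: "nat \<Rightarrow> 'k::field mpoly \<Rightarrow> 'k mpoly \<Rightarrow> nat" where
  "mult_in N p F = (GREATEST e. dvd_in N (p ^ e) F)"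

definition mdeg :: "(nat \<Rightarrow>\<^sub>0 nat) \<Rightarrow> nat" where
  "mdeg m = (\<Sum>i\<in>Poly_Mapping.keys m. Poly_Mapping.lookup m i)"

definition tdeg :: "'k::field mpoly \<Rightarrow> nat" where
  "tdeg p = Max (mdeg ` Poly_Mapping.keys p)"

definition pderiv_m :: "nat \<Rightarrow> 'k::field mpoly \<Rightarrow> 'k mpoly" where
  "pderiv_m i p = (\<Sum>m\<in>Poly_Mapping.keys p.
      Poly_Mapping.single (m - Poly_Mapping.single i 1) (of_nat (Poly_Mapping.lookup m i) * Poly_Mapping.lookup p m))"

(* A derivation of the polynomial ring in N variables, \<Sum>_(i<N) a_i \<partial>_(x_i),
  is represented by its coefficient function a; Der N is the free module Der_K. *)

definition Der :: "nat \<Rightarrow> (nat \<Rightarrow> 'k::field mpoly) set" where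
  "Der N = {a. \<forall>i. a i \<in> polys N \<and> (N \<le> i \<longrightarrow> a i = 0)}"

definition der_apply :: "nat \<Rightarrow> (nat \<Rightarrow> 'k::field mpoly) \<Rightarrow> 'k mpoly \<Rightarrow> 'k mpoly" where
  "der_apply N a g = (\<Sum>i<N. a i * pderiv_m i g)"

definition Dge :: "nat \<Rightarrow> 'k::field mpoly \<Rightarrow> nat \<Rightarrow> (nat \<Rightarrow> 'k mpoly) set" where
  "Dge N g e = {a \<in> Der N. dvd_in N (g ^ e) (der_apply N a g)}"

(* D(F) = intersection of D(F_i; e_i) over the irreducible factors F_i of F
  (ranging over all irreducible divisors; associates give the same condition). *)
definition DF :: "nat \<Rightarrow> 'k::field mpoly \<Rightarrow> (nat \<Rightarrow> 'k mpoly) set" where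
  "DF N F = Der N \<inter> (\<Inter>p\<in>{p. irreducible_in N p \<and> dvd_in N p F}. Dge N p (mult_in N p F))"

definition homog :: "nat \<Rightarrow> 'k::field mpoly \<Rightarrow> 'k mpoly" where
  "homog n g = (\<Sum>m\<in>Poly_Mapping.keys g.
      Poly_Mapping.single (m + Poly_Mapping.single n (tdeg g - mdeg m)) (Poly_Mapping.lookup g m))"

definition der_homog :: "nat \<Rightarrow> (nat \<Rightarrow> 'k::field mpoly) \<Rightarrow> (nat \<Rightarrow> 'k mpoly)" where
  "der_homog n a = (let e = Max {tdeg (a i) | i. i < n \<and> a i \<noteq> 0} in
     (\<lambda>i. if a i = 0 then 0 else var n ^ (e - tdeg (a i)) * homog n (a i)))"

inductive_set submod_gen :: "'k::field mpoly set \<Rightarrow> (nat \<Rightarrow> 'k mpoly) set \<Rightarrow> (nat \<Rightarrow> 'k mpoly) set"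
  for R G where
  zero: "(\<lambda>_. 0) \<in> submod_gen R G"
| add: "c \<in> R \<Longrightarrow> v \<in> G \<Longrightarrow> w \<in> submod_gen R G \<Longrightarrow> (\<lambda>i. c * v i + w i) \<in> submod_gen R G"

end

theory Submission
  imports Defs
begin

(* Write S = K[x_0,...,x_(n-1)], S^h = S[h] with h = x_n, and F = f^h.  Everything rests on
  dehomogenization P |-> P(h=1), a ring map S^h -> S that is left inverse to g |-> g^h, and on the
  factorization P = h^k (P(h=1))^h of every nonzero homogeneous P in S^h.  From these one gets:
   (1) the irreducible factors of F are exactly the q^h for the irreducible factors q of f, with
       the same multiplicities (h divides no homogenization);
   (2) for delta in D(f) also delta^h is in D(F), since delta^h(q^h) is homogeneous and
       dehomogenizes to delta(q);
   (3) D(F) is graded: every homogeneous component of an element of D(F) lies in D(F);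
   (4) if theta in D(F) has no d/dh-component, then delta = theta(h=1) lies in D(f); if moreover
       all coefficients of theta are homogeneous of one degree, then theta = h^k delta^h.
  (2) gives the inclusion D(f)^h <= D(F); (3) and (4) give the converse. *)

type_synonym monom = "nat \<Rightarrow>\<^sub>0 nat"

section \<open>Termwise transformations of polynomials\<close>

(* Homogenization,
  dehomogenization, partial derivatives and homogeneous components are all of this shape, so
  their additivity and support properties are proved once here. *)
definition map_terms :: "(monom \<Rightarrow> monom) \<Rightarrow> (monom \<Rightarrow> 'k::field) \<Rightarrow> 'k mpoly \<Rightarrow> 'k mpoly" where
  "map_terms \<phi> w p =
     (\<Sum>m\<in>Poly_Mapping.keys p. Poly_Mapping.single (\<phi> m) (w m * Poly_Mapping.lookup p m))"

lemma map_terms_superset: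
  assumes "finite A" "Poly_Mapping.keys p \<subseteq> A"
  shows "map_terms \<phi> w p = (\<Sum>m\<in>A. Poly_Mapping.single (\<phi> m) (w m * Poly_Mapping.lookup p m))"
  unfolding map_terms_def by (rule sum.mono_neutral_left) (auto simp: assms in_keys_iff)

lemma map_terms_add: "map_terms \<phi> w (p + q) = map_terms \<phi> w p + map_terms \<phi> w q"
proof -
  let ?A = "Poly_Mapping.keys p \<union> Poly_Mapping.keys q"
  have "map_terms \<phi> w (p + q)
      = (\<Sum>m\<in>?A. Poly_Mapping.single (\<phi> m) (w m * Poly_Mapping.lookup (p + q) m))"
    by (rule map_terms_superset) (auto dest: set_mp[OF keys_add])
  also have "\<dots> = (\<Sum>m\<in>?A. Poly_Mapping.single (\<phi> m) (w m * Poly_Mapping.lookup p m))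
     + (\<Sum>m\<in>?A. Poly_Mapping.single (\<phi> m) (w m * Poly_Mapping.lookup q m))"
    by (simp add: lookup_add distrib_left single_add sum.distrib)
  also have "\<dots> = map_terms \<phi> w p + map_terms \<phi> w q"
    by (simp add: map_terms_superset[symmetric])
  finally show ?thesis .
qed

lemma map_terms_zero [simp]: "map_terms \<phi> w 0 = 0"
  by (simp add: map_terms_def)

lemma map_terms_single [simp]:
  "map_terms \<phi> w (Poly_Mapping.single m c) = Poly_Mapping.single (\<phi> m) (w m * c)"
  by (simp add: map_terms_def)

lemma map_terms_sum: "map_terms \<phi> w (sum f A) = (\<Sum>a\<in>A. map_terms \<phi> w (f a))"
  by (induction A rule: infinite_finite_induct) (simp_all add: map_terms_add)

lemma lookup_map_terms:
  "Poly_Mapping.lookup (map_terms \<phi> w p) k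
     = (\<Sum>m\<in>{m\<in>Poly_Mapping.keys p. \<phi> m = k}. w m * Poly_Mapping.lookup p m)"
proof -
  have "Poly_Mapping.lookup (map_terms \<phi> w p) k
      = (\<Sum>m\<in>Poly_Mapping.keys p. if \<phi> m = k then w m * Poly_Mapping.lookup p m else 0)"
    by (simp add: map_terms_def lookup_sum lookup_single when_def)
  then show ?thesis by (simp add: sum.inter_filter)
qed

lemma lookup_map_terms_inj:
  assumes "inj_on \<phi> (Poly_Mapping.keys p)" "m \<in> Poly_Mapping.keys p"
  shows "Poly_Mapping.lookup (map_terms \<phi> w p) (\<phi> m) = w m * Poly_Mapping.lookup p m"
proof -
  have "{m'\<in>Poly_Mapping.keys p. \<phi> m' = \<phi> m} = {m}"
    using assms by (auto dest: inj_onD)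
  then show ?thesis by (simp add: lookup_map_terms)
qed

lemma keys_map_terms:
  "Poly_Mapping.keys (map_terms \<phi> w p) \<subseteq> \<phi> ` {m\<in>Poly_Mapping.keys p. w m \<noteq> 0}"
proof
  fix k assume "k \<in> Poly_Mapping.keys (map_terms \<phi> w p)"
  then have "(\<Sum>m\<in>{m\<in>Poly_Mapping.keys p. \<phi> m = k}. w m * Poly_Mapping.lookup p m) \<noteq> 0"
    by (simp add: lookup_map_terms in_keys_iff)
  then obtain m where "m \<in> Poly_Mapping.keys p" "\<phi> m = k" "w m * Poly_Mapping.lookup p m \<noteq> 0"
    by (metis (mono_tags, lifting) mem_Collect_eq sum.neutral)
  then show "k \<in> \<phi> ` {m\<in>Poly_Mapping.keys p. w m \<noteq> 0}" by auto
qed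

lemma map_terms_cong:
  "(\<And>m. m \<in> Poly_Mapping.keys p \<Longrightarrow> \<phi> m = \<psi> m) \<Longrightarrow> (\<And>m. m \<in> Poly_Mapping.keys p \<Longrightarrow> w m = v m)
   \<Longrightarrow> map_terms \<phi> w p = map_terms \<psi> v p"
  unfolding map_terms_def by (rule sum.cong) auto

lemma map_terms_id: "map_terms (\<lambda>m. m) (\<lambda>_. 1) p = p"
proof (rule poly_mapping_eqI)
  fix k
  show "Poly_Mapping.lookup (map_terms (\<lambda>m. m) (\<lambda>_. 1) p) k = Poly_Mapping.lookup p k"
  proof (cases "k \<in> Poly_Mapping.keys p")
    case True
    then show ?thesis using lookup_map_terms_inj[of "\<lambda>m. m" p k "\<lambda>_. 1"] by simp
  next
    case False
    then have "{m\<in>Poly_Mapping.keys p. m = k} = {}" by auto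
    then show ?thesis using False by (simp add: lookup_map_terms in_keys_iff)
  qed
qed

lemma map_terms_id_cong:
  "(\<And>m. m \<in> Poly_Mapping.keys p \<Longrightarrow> \<phi> m = m) \<Longrightarrow> (\<And>m. m \<in> Poly_Mapping.keys p \<Longrightarrow> w m = 1)
   \<Longrightarrow> map_terms \<phi> w p = p"
  using map_terms_cong[of p \<phi> "\<lambda>m. m" w "\<lambda>_. 1"] map_terms_id by metis

lemma poly_expand:
  "(p::'k::field mpoly) = (\<Sum>m\<in>Poly_Mapping.keys p. Poly_Mapping.single m (Poly_Mapping.lookup p m))"
  using map_terms_id[of p] by (simp add: map_terms_def)

lemma map_terms_comp:
  "map_terms \<phi> w (map_terms \<psi> u p) = map_terms (\<lambda>m. \<phi> (\<psi> m)) (\<lambda>m. w (\<psi> m) * u m) p"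
  by (simp add: map_terms_def[of \<psi>] map_terms_sum mult.assoc) (simp add: map_terms_def mult.assoc)

lemma map_terms_mult:
  assumes "\<And>a b. \<phi> (a + b) = \<phi> a + \<phi> b"
  shows "map_terms \<phi> (\<lambda>_. 1) (p * q) = map_terms \<phi> (\<lambda>_. 1) p * map_terms \<phi> (\<lambda>_. 1) q"
proof -
  have pq: "p * q = (\<Sum>a\<in>Poly_Mapping.keys p. \<Sum>b\<in>Poly_Mapping.keys q.
      Poly_Mapping.single (a + b) (Poly_Mapping.lookup p a * Poly_Mapping.lookup q b))"
    by (subst poly_expand[of p], subst poly_expand[of q]) (simp add: sum_product mult_single)
  have "map_terms \<phi> (\<lambda>_. 1) (p * q) = (\<Sum>a\<in>Poly_Mapping.keys p. \<Sum>b\<in>Poly_Mapping.keys q.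
      Poly_Mapping.single (\<phi> a + \<phi> b) (Poly_Mapping.lookup p a * Poly_Mapping.lookup q b))"
    by (simp add: pq map_terms_sum assms)
  also have "\<dots> = map_terms \<phi> (\<lambda>_. 1) p * map_terms \<phi> (\<lambda>_. 1) q"
    by (simp add: map_terms_def sum_product mult_single)
  finally show ?thesis .
qed

lemma single_mult_map_terms:
  "Poly_Mapping.single s c * map_terms \<phi> w p = map_terms (\<lambda>m. s + \<phi> m) (\<lambda>m. c * w m) p"
  by (simp add: map_terms_def sum_distrib_left mult_single mult.assoc)

section \<open>Monomials and the polynomial rings\<close>

lemma keys_add_monom:
  "Poly_Mapping.keys ((a::monom) + b) = Poly_Mapping.keys a \<union> Poly_Mapping.keys b"
  by (auto simp: in_keys_iff lookup_add)

lemma keys_minus_monom: "Poly_Mapping.keys ((a::monom) - b) \<subseteq> Poly_Mapping.keys a"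
  by (auto simp: in_keys_iff lookup_minus)

lemma mdeg_superset:
  "finite A \<Longrightarrow> Poly_Mapping.keys m \<subseteq> A \<Longrightarrow> mdeg m = (\<Sum>i\<in>A. Poly_Mapping.lookup m i)"
  unfolding mdeg_def by (rule sum.mono_neutral_left) (auto simp: in_keys_iff)

lemma mdeg_add: "mdeg (a + b) = mdeg a + mdeg b"
proof -
  let ?A = "Poly_Mapping.keys a \<union> Poly_Mapping.keys b"
  have "mdeg (a + b) = (\<Sum>i\<in>?A. Poly_Mapping.lookup (a + b) i)"
    by (rule mdeg_superset) (auto simp: keys_add_monom)
  also have "\<dots> = (\<Sum>i\<in>?A. Poly_Mapping.lookup a i) + (\<Sum>i\<in>?A. Poly_Mapping.lookup b i)"
    by (simp add: lookup_add sum.distrib)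
  also have "\<dots> = mdeg a + mdeg b"
    by (simp add: mdeg_superset[symmetric])
  finally show ?thesis .
qed

lemma mdeg_zero [simp]: "mdeg 0 = 0"
  by (simp add: mdeg_def)

lemma mdeg_single [simp]: "mdeg (Poly_Mapping.single i k) = k"
  by (simp add: mdeg_def)

lemma mdeg_eq_0: "mdeg m = 0 \<Longrightarrow> m = 0"
  unfolding mdeg_def by (intro poly_mapping_eqI) (metis in_keys_iff lookup_zero sum_eq_0_iff finite_keys)

lemma monom_split:
  "k \<le> Poly_Mapping.lookup m i \<Longrightarrow> (m::monom) = (m - Poly_Mapping.single i k) + Poly_Mapping.single i k"
  by (rule poly_mapping_eqI) (auto simp: lookup_add lookup_minus lookup_single when_def)

lemma mdeg_minus_single:
  "k \<le> Poly_Mapping.lookup m i \<Longrightarrow> mdeg (m - Poly_Mapping.single i k) = mdeg m - k"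
  by (metis monom_split mdeg_add mdeg_single add_diff_cancel_right')

lemma polys_iff:
  "p \<in> polys N \<longleftrightarrow> (\<forall>m\<in>Poly_Mapping.keys p. Poly_Mapping.keys m \<subseteq> {..<N})"
  by (simp add: polys_def)

lemma polys_zero [simp]: "0 \<in> polys N"
  by (simp add: polys_iff)

lemma polys_one [simp]: "1 \<in> polys N"
  by (simp add: polys_iff)

lemma polys_add: "p \<in> polys N \<Longrightarrow> q \<in> polys N \<Longrightarrow> p + q \<in> polys N"
  unfolding polys_iff using keys_add[of p q] by (meson Un_iff subsetD)

lemma polys_mult: "p \<in> polys N \<Longrightarrow> q \<in> polys N \<Longrightarrow> p * q \<in> polys N"
  unfolding polys_iff using keys_mult[of p q] by (fastforce simp: keys_add_monom)

lemma polys_sum: "(\<And>a. a \<in> A \<Longrightarrow> f a \<in> polys N) \<Longrightarrow> sum f A \<in> polys N"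
  by (induction A rule: infinite_finite_induct) (auto intro: polys_add)

lemma polys_power: "p \<in> polys N \<Longrightarrow> p ^ e \<in> polys N"
  by (induction e) (auto intro: polys_mult)

lemma polys_single: "Poly_Mapping.keys m \<subseteq> {..<N} \<Longrightarrow> Poly_Mapping.single m c \<in> polys N"
  by (simp add: polys_iff)

lemma polys_var: "i < N \<Longrightarrow> var i \<in> polys N"
  unfolding var_def by (rule polys_single) simp

lemma polys_map_terms:
  "(\<And>m. m \<in> Poly_Mapping.keys p \<Longrightarrow> w m \<noteq> 0 \<Longrightarrow> Poly_Mapping.keys (\<phi> m) \<subseteq> {..<N})
   \<Longrightarrow> map_terms \<phi> w p \<in> polys N"
  unfolding polys_iff using keys_map_terms[of \<phi> w p] by blast

section \<open>Homogeneous polynomials and homogeneous components\<close>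

definition homogeneous :: "nat \<Rightarrow> 'k::field mpoly \<Rightarrow> bool" where
  "homogeneous D p \<longleftrightarrow> (\<forall>m\<in>Poly_Mapping.keys p. mdeg m = D)"

definition hpart :: "nat \<Rightarrow> 'k::field mpoly \<Rightarrow> 'k mpoly" where
  "hpart d p = map_terms (\<lambda>m. m) (\<lambda>m. if mdeg m = d then 1 else 0) p"

lemma hpart_zero [simp]: "hpart d 0 = 0"
  by (simp add: hpart_def)

lemma hpart_sum: "hpart d (sum f A) = (\<Sum>a\<in>A. hpart d (f a))"
  by (simp add: hpart_def map_terms_sum)

lemma lookup_hpart:
  "Poly_Mapping.lookup (hpart d p) m = (if mdeg m = d then Poly_Mapping.lookup p m else 0)"
proof (cases "m \<in> Poly_Mapping.keys p")
  case True
  then show ?thesis unfolding hpart_def using lookup_map_terms_inj[of "\<lambda>m. m" p m] by simp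
next
  case False
  then have "{m'\<in>Poly_Mapping.keys p. m' = m} = {}" by auto
  then show ?thesis using False by (simp add: hpart_def lookup_map_terms in_keys_iff)
qed

lemma keys_hpart: "Poly_Mapping.keys (hpart d p) = {m\<in>Poly_Mapping.keys p. mdeg m = d}"
  by (auto simp: in_keys_iff lookup_hpart split: if_splits)

lemma homogeneous_hpart: "homogeneous d (hpart d p)"
  by (simp add: homogeneous_def keys_hpart)

lemma polys_hpart: "p \<in> polys N \<Longrightarrow> hpart d p \<in> polys N"
  unfolding polys_iff by (simp add: keys_hpart)

lemma hpart_homogeneous: "homogeneous D X \<Longrightarrow> hpart k X = (if D = k then X else 0)"
  by (rule poly_mapping_eqI) (auto simp: lookup_hpart homogeneous_def in_keys_iff)

lemma hpart_eq_0: "(\<And>m. m \<in> Poly_Mapping.keys p \<Longrightarrow> mdeg m \<noteq> d) \<Longrightarrow> hpart d p = 0"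
  by (rule poly_mapping_eqI) (auto simp: lookup_hpart in_keys_iff)

lemma hpart_decomp:
  assumes "finite A" "\<And>m. m \<in> Poly_Mapping.keys p \<Longrightarrow> mdeg m \<in> A"
  shows "p = (\<Sum>d\<in>A. hpart d p)"
proof (rule poly_mapping_eqI)
  fix m
  show "Poly_Mapping.lookup p m = Poly_Mapping.lookup (\<Sum>d\<in>A. hpart d p) m"
  proof (cases "m \<in> Poly_Mapping.keys p")
    case True
    then have "mdeg m \<in> A" using assms by auto
    then show ?thesis using assms(1) by (simp add: lookup_sum lookup_hpart)
  next
    case False
    then have "Poly_Mapping.lookup p m = 0" by (simp add: in_keys_iff)
    then show ?thesis by (simp add: lookup_sum lookup_hpart if_distrib cong: if_cong)
  qed
qed

lemma homogeneous_add: "homogeneous D p \<Longrightarrow> homogeneous D q \<Longrightarrow> homogeneous D (p + q)"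
  unfolding homogeneous_def using keys_add[of p q] by (meson Un_iff subsetD)

lemma homogeneous_sum: "(\<And>x. x \<in> A \<Longrightarrow> homogeneous D (f x)) \<Longrightarrow> homogeneous D (sum f A)"
  by (induction A rule: infinite_finite_induct) (auto intro: homogeneous_add simp: homogeneous_def[of D 0])

lemma homogeneous_mult:
  "homogeneous D p \<Longrightarrow> homogeneous E q \<Longrightarrow> homogeneous (D + E) (p * q)"
  unfolding homogeneous_def using keys_mult[of p q] by (fastforce simp: mdeg_add)

lemma homogeneous_power: "homogeneous D p \<Longrightarrow> homogeneous (e * D) (p ^ e)"
proof (induction e)
  case 0
  then show ?case by (simp add: homogeneous_def)
next
  case (Suc e)
  then show ?case using homogeneous_mult[of D p "e * D" "p ^ e"] by (simp add: add.commute)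
qed

lemma hpart_mult_homogeneous:
  assumes "homogeneous E Q"
  shows "hpart k (p * Q) = (if E \<le> k then hpart (k - E) p * Q else 0)"
proof -
  define A where "A = mdeg ` Poly_Mapping.keys p"
  have fA: "finite A" by (simp add: A_def)
  have "p * Q = (\<Sum>d\<in>A. hpart d p) * Q"
    using hpart_decomp[of A p] fA by (simp add: A_def)
  then have "hpart k (p * Q) = (\<Sum>d\<in>A. hpart k (hpart d p * Q))"
    by (simp add: sum_distrib_right hpart_sum)
  also have "\<dots> = (\<Sum>d\<in>A. if d = k - E \<and> E \<le> k then hpart d p * Q else 0)"
  proof (rule sum.cong)
    fix d
    have "homogeneous (d + E) (hpart d p * Q)"
      using homogeneous_mult[OF homogeneous_hpart assms] .
    then show "hpart k (hpart d p * Q) = (if d = k - E \<and> E \<le> k then hpart d p * Q else 0)"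
      by (auto simp: hpart_homogeneous)
  qed simp
  also have "\<dots> = (if E \<le> k then hpart (k - E) p * Q else 0)"
  proof (cases "E \<le> k \<and> k - E \<notin> A")
    case True
    then have "hpart (k - E) p = 0" by (intro hpart_eq_0) (force simp: A_def)
    then show ?thesis using True by (simp add: sum.delta' fA)
  qed (auto simp: sum.delta' fA)
  finally show ?thesis .
qed

lemma hpart_mult: "hpart k (p * q) = (\<Sum>j\<in>{..k}. hpart (k - j) p * hpart j q)"
proof -
  define B where "B = mdeg ` Poly_Mapping.keys q"
  have fB: "finite B" by (simp add: B_def)
  have "p * q = (\<Sum>j\<in>B. p * hpart j q)"
    using hpart_decomp[of B q] fB by (simp add: B_def sum_distrib_left[symmetric])
  then have "hpart k (p * q) = (\<Sum>j\<in>B. hpart k (p * hpart j q))"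
    by (simp add: hpart_sum)
  also have "\<dots> = (\<Sum>j\<in>B. if j \<le> k then hpart (k - j) p * hpart j q else 0)"
    by (simp add: hpart_mult_homogeneous[OF homogeneous_hpart])
  also have "\<dots> = (\<Sum>j\<in>B \<inter> {..k}. hpart (k - j) p * hpart j q)"
    by (simp add: sum.inter_restrict fB)
  also have "\<dots> = (\<Sum>j\<in>{..k}. hpart (k - j) p * hpart j q)"
  proof (rule sum.mono_neutral_left)
    show "\<forall>j\<in>{..k} - B \<inter> {..k}. hpart (k - j) p * hpart j q = 0"
      by (auto intro!: hpart_eq_0 simp: B_def)
  qed auto
  finally show ?thesis .
qed

section \<open>Top and bottom degree\<close>

lemma tdeg_ge: "m \<in> Poly_Mapping.keys p \<Longrightarrow> mdeg m \<le> tdeg p"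
  unfolding tdeg_def by (rule Max_ge) auto

lemma tdeg_attained: "p \<noteq> 0 \<Longrightarrow> \<exists>m\<in>Poly_Mapping.keys p. mdeg m = tdeg p"
  unfolding tdeg_def using Max_in[of "mdeg ` Poly_Mapping.keys p"] by fastforce

definition ldeg :: "'k::field mpoly \<Rightarrow> nat" where
  "ldeg p = Min (mdeg ` Poly_Mapping.keys p)"

lemma ldeg_le: "m \<in> Poly_Mapping.keys p \<Longrightarrow> ldeg p \<le> mdeg m"
  unfolding ldeg_def by (rule Min_le) auto

lemma ldeg_attained: "p \<noteq> 0 \<Longrightarrow> \<exists>m\<in>Poly_Mapping.keys p. mdeg m = ldeg p"
  unfolding ldeg_def using Min_in[of "mdeg ` Poly_Mapping.keys p"] by fastforce

lemma ldeg_le_tdeg: "p \<noteq> 0 \<Longrightarrow> ldeg p \<le> tdeg p"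
  using ldeg_attained tdeg_ge ldeg_le by metis

lemma hpart_key_nonzero: "m \<in> Poly_Mapping.keys p \<Longrightarrow> hpart (mdeg m) p \<noteq> 0"
  by (metis in_keys_iff lookup_hpart lookup_zero)

lemma hpart_tdeg_nonzero: "p \<noteq> 0 \<Longrightarrow> hpart (tdeg p) p \<noteq> 0"
  using tdeg_attained hpart_key_nonzero by metis

lemma hpart_ldeg_nonzero: "p \<noteq> 0 \<Longrightarrow> hpart (ldeg p) p \<noteq> 0"
  using ldeg_attained hpart_key_nonzero by metis

lemma hpart_above_tdeg: "tdeg p < k \<Longrightarrow> hpart k p = 0"
  by (rule hpart_eq_0) (use tdeg_ge in force)

lemma hpart_below_ldeg: "k < ldeg p \<Longrightarrow> hpart k p = 0"
  by (rule hpart_eq_0) (use ldeg_le in force)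

lemma sum_single_nonzero:
  assumes "b \<in> A" "finite A" "\<And>j. j \<in> A \<Longrightarrow> j \<noteq> b \<Longrightarrow> f j = 0"
  shows "sum f A = f b"
  using sum.remove[OF assms(2,1), of f] assms(3) by (simp add: sum.neutral)

(* The top (bottom) homogeneous component of a product is the product of the top (bottom)
  components; over a field the latter is nonzero. *)
lemma hpart_top_mult:
  "hpart (tdeg p + tdeg q) (p * q) = hpart (tdeg p) p * hpart (tdeg q) q"
proof -
  have "hpart (tdeg p + tdeg q) (p * q)
      = (\<Sum>j\<in>{..tdeg p + tdeg q}. hpart (tdeg p + tdeg q - j) p * hpart j q)"
    by (rule hpart_mult)
  also have "\<dots> = hpart (tdeg p + tdeg q - tdeg q) p * hpart (tdeg q) q"
    by (rule sum_single_nonzero) (auto simp: hpart_above_tdeg nat_neq_iff)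
  finally show ?thesis by simp
qed

lemma hpart_bottom_mult:
  "hpart (ldeg p + ldeg q) (p * q) = hpart (ldeg p) p * hpart (ldeg q) q"
proof -
  have "hpart (ldeg p + ldeg q) (p * q)
      = (\<Sum>j\<in>{..ldeg p + ldeg q}. hpart (ldeg p + ldeg q - j) p * hpart j q)"
    by (rule hpart_mult)
  also have "\<dots> = hpart (ldeg p + ldeg q - ldeg q) p * hpart (ldeg q) q"
    by (rule sum_single_nonzero) (auto simp: hpart_below_ldeg nat_neq_iff)
  finally show ?thesis by simp
qed

lemma hpart_above_mult: "tdeg p + tdeg q < k \<Longrightarrow> hpart k (p * q) = 0"
  unfolding hpart_mult
proof (rule sum.neutral, intro ballI)
  fix j assume "tdeg p + tdeg q < k" "j \<in> {..k}"
  then show "hpart (k - j) p * hpart j q = 0"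
    by (cases "tdeg q < j") (auto simp: hpart_above_tdeg)
qed

lemma tdeg_mult: "p \<noteq> 0 \<Longrightarrow> q \<noteq> 0 \<Longrightarrow> tdeg (p * q) = tdeg p + tdeg q"
proof -
  assume nz: "p \<noteq> 0" "q \<noteq> 0"
  have top: "hpart (tdeg p + tdeg q) (p * q) \<noteq> 0"
    using nz by (simp add: hpart_top_mult hpart_tdeg_nonzero)
  then have "p * q \<noteq> 0" by auto
  then have "hpart (tdeg (p * q)) (p * q) \<noteq> 0" by (rule hpart_tdeg_nonzero)
  then have "\<not> tdeg p + tdeg q < tdeg (p * q)" using hpart_above_mult by blast
  moreover have "\<not> tdeg (p * q) < tdeg p + tdeg q" using top hpart_above_tdeg by blast
  ultimately show ?thesis by simp
qed

lemma tdeg_one [simp]: "tdeg (1::'k::field mpoly) = 0"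
  by (simp add: tdeg_def mdeg_def)

lemma tdeg_power: "p \<noteq> 0 \<Longrightarrow> tdeg (p ^ e) = e * tdeg p"
  by (induction e) (simp_all add: tdeg_mult)

lemma tdeg_homogeneous: "homogeneous D p \<Longrightarrow> p \<noteq> 0 \<Longrightarrow> tdeg p = D"
  using tdeg_attained unfolding homogeneous_def by metis

(* Factors of a homogeneous polynomial are homogeneous: comparing top and bottom components
  of the product forces ldeg p = tdeg p. *)
lemma homogeneous_factor:
  assumes "homogeneous D (p * q)" "p \<noteq> 0" "q \<noteq> 0"
  shows "homogeneous (tdeg p) p"
proof -
  have top: "tdeg p + tdeg q = D"
  proof (rule ccontr)
    assume "tdeg p + tdeg q \<noteq> D"
    then have "hpart (tdeg p + tdeg q) (p * q) = 0" using hpart_homogeneous[OF assms(1)] by simp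
    then show False
      using hpart_top_mult[of p q] hpart_tdeg_nonzero[OF assms(2)] hpart_tdeg_nonzero[OF assms(3)]
      by simp
  qed
  have bottom: "ldeg p + ldeg q = D"
  proof (rule ccontr)
    assume "ldeg p + ldeg q \<noteq> D"
    then have "hpart (ldeg p + ldeg q) (p * q) = 0" using hpart_homogeneous[OF assms(1)] by simp
    then show False
      using hpart_bottom_mult[of p q] hpart_ldeg_nonzero[OF assms(2)] hpart_ldeg_nonzero[OF assms(3)]
      by simp
  qed
  have "ldeg p = tdeg p"
    using top bottom ldeg_le_tdeg[OF assms(2)] ldeg_le_tdeg[OF assms(3)] by linarith
  then show ?thesis unfolding homogeneous_def using ldeg_le tdeg_ge by (metis le_antisym)
qed

section \<open>Dehomogenization and homogenization\<close>

(* Dehomogenization with respect to h = x_n, i.e. the substitution h := 1. *)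
definition dehom_monom :: "nat \<Rightarrow> monom \<Rightarrow> monom" where
  "dehom_monom n m = m - Poly_Mapping.single n (Poly_Mapping.lookup m n)"

definition dehom :: "nat \<Rightarrow> 'k::field mpoly \<Rightarrow> 'k mpoly" where
  "dehom n p = map_terms (dehom_monom n) (\<lambda>_. 1) p"

lemma lookup_dehom_monom:
  "Poly_Mapping.lookup (dehom_monom n m) i = (if i = n then 0 else Poly_Mapping.lookup m i)"
  by (simp add: dehom_monom_def lookup_minus lookup_single_not_eq)

lemma dehom_monom_split:
  "dehom_monom n m + Poly_Mapping.single n (Poly_Mapping.lookup m n) = m"
  unfolding dehom_monom_def using monom_split[of "Poly_Mapping.lookup m n" m n] by simp

lemma mdeg_dehom_monom: "mdeg (dehom_monom n m) + Poly_Mapping.lookup m n = mdeg m"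
  using mdeg_add[of "dehom_monom n m" "Poly_Mapping.single n (Poly_Mapping.lookup m n)"]
    dehom_monom_split[of n m] by simp

lemma dehom_zero [simp]: "dehom n 0 = 0"
  by (simp add: dehom_def)

lemma dehom_sum: "dehom n (sum f A) = (\<Sum>a\<in>A. dehom n (f a))"
  by (simp add: dehom_def map_terms_sum)

lemma dehom_mult: "dehom n (p * q) = dehom n p * dehom n q"
  unfolding dehom_def
  by (rule map_terms_mult) (rule poly_mapping_eqI, simp add: lookup_dehom_monom lookup_add)

lemma dehom_power: "dehom n (p ^ e) = dehom n p ^ e"
proof -
  have one: "dehom n (1::'k::field mpoly) = 1"
    using map_terms_single[of "dehom_monom n" "\<lambda>_. 1" 0 "1::'k"]
    by (simp add: dehom_def dehom_monom_def)
  show ?thesis by (induction e) (simp_all add: dehom_mult one)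
qed

lemma dehom_var [simp]: "dehom n (var n :: 'k::field mpoly) = 1"
proof -
  have "dehom_monom n (Poly_Mapping.single n 1) = 0"
    by (rule poly_mapping_eqI) (simp add: lookup_dehom_monom lookup_single when_def)
  then show ?thesis by (simp add: var_def dehom_def)
qed

lemma dehom_polys: "p \<in> polys (Suc n) \<Longrightarrow> dehom n p \<in> polys n"
  unfolding dehom_def
proof (rule polys_map_terms)
  fix m assume "p \<in> polys (Suc n)" "m \<in> Poly_Mapping.keys p"
  then have "Poly_Mapping.keys m \<subseteq> {..<Suc n}" by (simp add: polys_iff)
  moreover have "Poly_Mapping.keys (dehom_monom n m) \<subseteq> Poly_Mapping.keys m - {n}"
    by (auto simp: in_keys_iff lookup_dehom_monom split: if_splits)
  ultimately show "Poly_Mapping.keys (dehom_monom n m) \<subseteq> {..<n}"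
    by (force simp: less_Suc_eq)
qed

(* On a homogeneous polynomial, dehomogenization loses no information: the h-exponent of a
  term is recovered from its degree. *)
lemma dehom_monom_inj_on_homogeneous:
  "homogeneous D P \<Longrightarrow> inj_on (dehom_monom n) (Poly_Mapping.keys P)"
proof (rule inj_onI)
  fix a b assume "homogeneous D P" "a \<in> Poly_Mapping.keys P" "b \<in> Poly_Mapping.keys P"
    and eq: "dehom_monom n a = dehom_monom n b"
  then have "mdeg a = mdeg b" by (simp add: homogeneous_def)
  then have "Poly_Mapping.lookup a n = Poly_Mapping.lookup b n"
    using mdeg_dehom_monom[of n a] mdeg_dehom_monom[of n b] eq by simp
  then show "a = b" using dehom_monom_split[of n a] dehom_monom_split[of n b] eq by metis
qed

lemma dehom_monom_in_keys:
  assumes "homogeneous D P" "m \<in> Poly_Mapping.keys P"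
  shows "dehom_monom n m \<in> Poly_Mapping.keys (dehom n P)"
  using lookup_map_terms_inj[OF dehom_monom_inj_on_homogeneous[OF assms(1)] assms(2)] assms(2)
  by (simp add: dehom_def in_keys_iff)

lemma dehom_nonzero: "homogeneous D P \<Longrightarrow> P \<noteq> 0 \<Longrightarrow> dehom n P \<noteq> 0"
  using dehom_monom_in_keys by (metis all_not_in_conv keys_eq_empty)

lemma tdeg_dehom_le: "homogeneous D P \<Longrightarrow> P \<noteq> 0 \<Longrightarrow> tdeg (dehom n P) \<le> D"
proof -
  assume P: "homogeneous D P" "P \<noteq> 0"
  then obtain k where k: "k \<in> Poly_Mapping.keys (dehom n P)" "mdeg k = tdeg (dehom n P)"
    using tdeg_attained dehom_nonzero by metis
  then obtain m where "m \<in> Poly_Mapping.keys P" "k = dehom_monom n m"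
    using keys_map_terms[of "dehom_monom n" "\<lambda>_. 1" P] by (auto simp: dehom_def)
  then show ?thesis using mdeg_dehom_monom[of n m] P(1) k(2) by (simp add: homogeneous_def)
qed

lemma homog_map_terms:
  "homog n g = map_terms (\<lambda>m. m + Poly_Mapping.single n (tdeg g - mdeg m)) (\<lambda>_. 1) g"
  by (simp add: homog_def map_terms_def)

lemma homog_zero [simp]: "homog n 0 = 0"
  by (simp add: homog_def)

lemma homog_one [simp]: "homog n (1::'k::field mpoly) = 1"
  by (simp add: homog_def)

lemma homog_polys: "g \<in> polys n \<Longrightarrow> homog n g \<in> polys (Suc n)"
  unfolding homog_map_terms
proof (rule polys_map_terms)
  fix m assume "g \<in> polys n" "m \<in> Poly_Mapping.keys g"
  then have "Poly_Mapping.keys m \<subseteq> {..<n}" by (simp add: polys_iff)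
  then show "Poly_Mapping.keys (m + Poly_Mapping.single n (tdeg g - mdeg m)) \<subseteq> {..<Suc n}"
    by (auto simp: keys_add_monom)
qed

lemma homogeneous_homog: "homogeneous (tdeg g) (homog n g)"
  unfolding homogeneous_def homog_map_terms
  using keys_map_terms[of "\<lambda>m. m + Poly_Mapping.single n (tdeg g - mdeg m)" "\<lambda>_. 1" g]
  by (auto simp: mdeg_add dest!: tdeg_ge[of _ g])

lemma polys_lookup_last: "g \<in> polys n \<Longrightarrow> m \<in> Poly_Mapping.keys g \<Longrightarrow> Poly_Mapping.lookup m n = 0"
  unfolding polys_iff by (metis lessThan_iff less_irrefl in_keys_iff subsetD)

lemma dehom_homog: "g \<in> polys n \<Longrightarrow> dehom n (homog n g) = g"
  unfolding dehom_def homog_map_terms map_terms_comp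
  by (rule map_terms_id_cong)
    (auto intro!: poly_mapping_eqI simp: polys_lookup_last lookup_dehom_monom lookup_add
      lookup_single when_def)

lemma homog_nonzero: "g \<in> polys n \<Longrightarrow> g \<noteq> 0 \<Longrightarrow> homog n g \<noteq> 0"
  using dehom_homog by fastforce

lemma tdeg_homog: "g \<in> polys n \<Longrightarrow> g \<noteq> 0 \<Longrightarrow> tdeg (homog n g) = tdeg g"
  using tdeg_homogeneous[OF homogeneous_homog homog_nonzero] by blast

lemma var_power: "(var n :: 'k::field mpoly) ^ k = Poly_Mapping.single (Poly_Mapping.single n k) 1"
  by (induction k) (simp_all add: var_def mult_single single_add[symmetric] add.commute)

lemma homogeneous_var_power: "homogeneous k (var n ^ k :: 'k::field mpoly)"
  unfolding var_power homogeneous_def by simp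

lemma homogeneous_eq_var_power_homog:
  assumes "P \<in> polys (Suc n)" "homogeneous D P" "P \<noteq> 0"
  shows "P = var n ^ (D - tdeg (dehom n P)) * homog n (dehom n P)"
proof -
  define g where "g = dehom n P"
  define T where "T = tdeg g"
  have TD: "T \<le> D" unfolding T_def g_def using tdeg_dehom_le assms by blast
  have "var n ^ (D - T) * homog n g
      = map_terms (\<lambda>m. Poly_Mapping.single n (D - T) + (m + Poly_Mapping.single n (T - mdeg m))) (\<lambda>_. 1) g"
    unfolding var_power homog_map_terms single_mult_map_terms T_def by simp
  also have "\<dots> = map_terms (\<lambda>m. Poly_Mapping.single n (D - T)
      + (dehom_monom n m + Poly_Mapping.single n (T - mdeg (dehom_monom n m)))) (\<lambda>_. 1) P"
    unfolding g_def dehom_def map_terms_comp by simp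
  also have "\<dots> = P"
  proof (rule map_terms_id_cong)
    fix m assume m: "m \<in> Poly_Mapping.keys P"
    have "mdeg (dehom_monom n m) \<le> T"
      unfolding T_def g_def by (rule tdeg_ge[OF dehom_monom_in_keys[OF assms(2) m]])
    moreover have "mdeg (dehom_monom n m) + Poly_Mapping.lookup m n = D"
      using mdeg_dehom_monom[of n m] assms(2) m by (simp add: homogeneous_def)
    ultimately have "D - T + (T - mdeg (dehom_monom n m)) = Poly_Mapping.lookup m n"
      using TD by linarith
    then show "Poly_Mapping.single n (D - T)
        + (dehom_monom n m + Poly_Mapping.single n (T - mdeg (dehom_monom n m))) = m"
      using dehom_monom_split[of n m] by (metis add.left_commute single_add)
  qed simp
  finally show ?thesis unfolding g_def T_def by simp
qed

(* Homogenization is multiplicative on nonzero polynomials: both sides are homogeneous of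
  the same degree and dehomogenize to a * b. *)
lemma homog_mult:
  assumes "a \<in> polys n" "b \<in> polys n" "a \<noteq> 0" "b \<noteq> 0"
  shows "homog n (a * b) = homog n a * homog n b"
proof -
  let ?P = "homog n a * homog n b"
  have P: "?P \<in> polys (Suc n)" using assms by (simp add: polys_mult homog_polys)
  have hom: "homogeneous (tdeg a + tdeg b) ?P"
    using homogeneous_mult[OF homogeneous_homog homogeneous_homog] .
  have nz: "?P \<noteq> 0" by (simp add: homog_nonzero assms)
  have "dehom n ?P = a * b" using assms by (simp add: dehom_mult dehom_homog)
  then have "?P = var n ^ (tdeg a + tdeg b - tdeg (a * b)) * homog n (a * b)"
    using homogeneous_eq_var_power_homog[OF P hom nz] by simp
  then show ?thesis using assms by (simp add: tdeg_mult)
qed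

lemma homog_power:
  assumes "q \<in> polys n" "q \<noteq> 0"
  shows "homog n (q ^ e) = homog n q ^ e"
proof (induction e)
  case (Suc e)
  have "homog n (q * q ^ e) = homog n q * homog n (q ^ e)"
    by (rule homog_mult) (use assms in \<open>auto simp: polys_power\<close>)
  then show ?case using Suc by simp
qed simp

(* h divides no homogenization: the terms of g of top degree survive in g^h without h,
  whereas every term of a multiple of h contains h. *)
lemma homog_has_term_without_var:
  assumes "g \<in> polys n" "g \<noteq> 0"
  shows "\<exists>k\<in>Poly_Mapping.keys (homog n g). Poly_Mapping.lookup k n = 0"
proof -
  obtain m where m: "m \<in> Poly_Mapping.keys g" "mdeg m = tdeg g"
    using tdeg_attained assms by blast
  let ?\<psi> = "\<lambda>m. m + Poly_Mapping.single n (tdeg g - mdeg m)"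
  have "inj_on ?\<psi> (Poly_Mapping.keys g)"
  proof (rule inj_onI)
    fix a b assume ab: "a \<in> Poly_Mapping.keys g" "b \<in> Poly_Mapping.keys g" "?\<psi> a = ?\<psi> b"
    have "Poly_Mapping.lookup a n = 0" "Poly_Mapping.lookup b n = 0"
      using ab assms polys_lookup_last by blast+
    then have "dehom_monom n (?\<psi> a) = a" "dehom_monom n (?\<psi> b) = b"
      by (auto intro!: poly_mapping_eqI simp: lookup_dehom_monom lookup_add lookup_single when_def)
    then show "a = b" using ab(3) by metis
  qed
  then have "Poly_Mapping.lookup (homog n g) (?\<psi> m) = Poly_Mapping.lookup g m"
    unfolding homog_map_terms using lookup_map_terms_inj m(1) by fastforce
  then have "m \<in> Poly_Mapping.keys (homog n g)" using m by (simp add: in_keys_iff)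
  then show ?thesis using assms m polys_lookup_last by blast
qed

lemma var_exponent_of_var_multiple:
  "k \<in> Poly_Mapping.keys (var n * s) \<Longrightarrow> 1 \<le> Poly_Mapping.lookup k n"
  using keys_mult[of "var n" s] by (auto simp: var_def lookup_add)

lemma homog_not_var_multiple:
  assumes "g \<in> polys n" "g \<noteq> 0" "1 \<le> k"
  shows "homog n g \<noteq> var n ^ k * s"
proof
  assume "homog n g = var n ^ k * s"
  also have "\<dots> = var n * (var n ^ (k - 1) * s)"
    using assms(3) by (metis Suc_diff_le diff_Suc_1 mult.assoc power_Suc)
  finally show False
    using homog_has_term_without_var[OF assms(1,2)] var_exponent_of_var_multiple by fastforce
qed

section \<open>Units, irreducible factors and multiplicities\<close>

lemma const_of_tdeg_0:
  assumes "tdeg p = 0"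
  shows "p = Poly_Mapping.single 0 (Poly_Mapping.lookup p 0)"
proof -
  have keys: "Poly_Mapping.keys p \<subseteq> {0}"
    using tdeg_ge[of _ p] assms mdeg_eq_0 by fastforce
  have "p = (\<Sum>m\<in>Poly_Mapping.keys p. Poly_Mapping.single m (Poly_Mapping.lookup p m))"
    by (rule poly_expand)
  also have "\<dots> = (\<Sum>m\<in>{0}. Poly_Mapping.single m (Poly_Mapping.lookup p m))"
    by (rule sum.mono_neutral_left) (use keys in \<open>auto simp: in_keys_iff\<close>)
  finally show ?thesis by simp
qed

lemma unit_in_iff: "unit_in N u \<longleftrightarrow> u \<in> polys N \<and> u \<noteq> 0 \<and> tdeg u = 0"
proof
  assume "unit_in N u"
  then obtain v where uv: "u \<in> polys N" "u * v = 1" by (auto simp: unit_in_def)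
  then have "u \<noteq> 0" "v \<noteq> 0" by auto
  then have "tdeg u + tdeg v = 0" using tdeg_mult[of u v] uv by simp
  then show "u \<in> polys N \<and> u \<noteq> 0 \<and> tdeg u = 0" using uv \<open>u \<noteq> 0\<close> by simp
next
  assume u: "u \<in> polys N \<and> u \<noteq> 0 \<and> tdeg u = 0"
  define c where "c = Poly_Mapping.lookup u 0"
  have u_eq: "u = Poly_Mapping.single 0 c" using const_of_tdeg_0 u c_def by blast
  then have "c \<noteq> 0" using u by auto
  then have "u * Poly_Mapping.single 0 (inverse c) = 1" using u_eq by (simp add: mult_single)
  moreover have "Poly_Mapping.single 0 (inverse c) \<in> polys N" by (simp add: polys_single)
  ultimately show "unit_in N u" using u by (auto simp: unit_in_def)
qed

lemma irreducible_tdeg_pos: "irreducible_in N p \<Longrightarrow> 1 \<le> tdeg p"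
  unfolding irreducible_in_def using unit_in_iff by fastforce

lemma dvd_in_zero: "dvd_in N a 0"
  unfolding dvd_in_def by (rule bexI[of _ 0]) simp_all

(* Multiplicities are well defined: p^e | F forces e \<le> tdeg F. *)
lemma mult_in_bound:
  assumes "irreducible_in N p" "F \<noteq> 0" "dvd_in N (p ^ e) F"
  shows "e \<le> tdeg F"
proof -
  obtain r where r: "F = p ^ e * r" using assms(3) by (auto simp: dvd_in_def)
  have "p \<noteq> 0" "r \<noteq> 0" using r assms by (auto simp: irreducible_in_def)
  then have "tdeg F = e * tdeg p + tdeg r" using r by (simp add: tdeg_mult tdeg_power)
  moreover have "1 \<le> tdeg p" using irreducible_tdeg_pos assms(1) .
  ultimately show ?thesis by (metis le_add1 le_trans mult.right_neutral mult_le_mono2)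
qed

lemma pow_mult_in_dvd:
  assumes "irreducible_in N p" "F \<in> polys N" "F \<noteq> 0"
  shows "dvd_in N (p ^ mult_in N p F) F"
  unfolding mult_in_def
proof (rule GreatestI_nat)
  show "dvd_in N (p ^ 0) F" using assms(2) by (auto simp: dvd_in_def)
  show "\<And>y. dvd_in N (p ^ y) F \<Longrightarrow> y \<le> tdeg F" using mult_in_bound assms by blast
qed

lemma mult_in_ge:
  assumes "irreducible_in N p" "F \<noteq> 0" "dvd_in N (p ^ e) F"
  shows "e \<le> mult_in N p F"
  unfolding mult_in_def using mult_in_bound[OF assms(1,2)] assms(3) by (blast intro: Greatest_le_nat)

lemma dehom_dvd: "dvd_in (Suc n) p P \<Longrightarrow> dvd_in n (dehom n p) (dehom n P)"
  unfolding dvd_in_def using dehom_mult dehom_polys by blast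

lemma homog_dvd:
  assumes "q \<in> polys n" "f \<in> polys n" "f \<noteq> 0" "dvd_in n q f"
  shows "dvd_in (Suc n) (homog n q) (homog n f)"
proof -
  obtain r where r: "r \<in> polys n" "f = q * r" using assms(4) by (auto simp: dvd_in_def)
  then have "homog n f = homog n q * homog n r" using assms(1,3) by (simp add: homog_mult)
  then show ?thesis using homog_polys[OF r(1)] by (auto simp: dvd_in_def)
qed

lemma homog_dvd_of_dehom_dvd:
  assumes P: "P \<in> polys (Suc n)" "homogeneous D P"
    and g: "g \<in> polys n" "g \<noteq> 0" "dvd_in n g (dehom n P)"
  shows "dvd_in (Suc n) (homog n g) P"
proof (cases "P = 0")
  case True
  then show ?thesis by (simp add: dvd_in_zero)
next
  case False
  obtain s where s: "s \<in> polys n" "dehom n P = g * s" using g(3) by (auto simp: dvd_in_def)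
  have "s \<noteq> 0" using s dehom_nonzero[OF P(2) False] by auto
  define k where "k = D - tdeg (dehom n P)"
  have "P = var n ^ k * homog n (g * s)"
    using homogeneous_eq_var_power_homog[OF P False] s(2) by (simp add: k_def)
  also have "\<dots> = homog n g * (var n ^ k * homog n s)"
    using homog_mult[OF g(1) s(1) g(2) \<open>s \<noteq> 0\<close>] by (simp add: ac_simps)
  finally show ?thesis
    using s(1) by (auto simp: dvd_in_def intro!: polys_mult polys_power polys_var homog_polys)
qed

(* A factor a of q^h whose dehomogenization is a unit is itself a unit: a = h^k * const,
  and k = 0 because h does not divide q^h. *)
lemma unit_factor_of_homog:
  assumes q: "q \<in> polys n" "q \<noteq> 0" and qab: "homog n q = a * b"
    and ab: "a \<in> polys (Suc n)" "a \<noteq> 0" "b \<noteq> 0"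
    and unit: "unit_in n (dehom n a)"
  shows "unit_in (Suc n) a"
proof -
  have "homogeneous (tdeg a) a"
    using homogeneous_factor[of "tdeg q" a b] homogeneous_homog[of q n] qab ab by metis
  then have "a = var n ^ (tdeg a - tdeg (dehom n a)) * homog n (dehom n a)"
    using homogeneous_eq_var_power_homog ab by blast
  moreover have "tdeg (dehom n a) = 0" using unit unit_in_iff by blast
  ultimately have a: "a = var n ^ tdeg a * homog n (dehom n a)" by simp
  have "tdeg a = 0"
  proof (rule ccontr)
    assume "tdeg a \<noteq> 0"
    have "homog n q = var n ^ tdeg a * (homog n (dehom n a) * b)"
      using qab a by (metis mult.assoc)
    then show False using homog_not_var_multiple[OF q] \<open>tdeg a \<noteq> 0\<close> by simp
  qed
  then show ?thesis using unit_in_iff ab by blast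
qed

lemma irreducible_homog:
  assumes "irreducible_in n q"
  shows "irreducible_in (Suc n) (homog n q)"
proof -
  have q: "q \<in> polys n" "q \<noteq> 0" "\<not> unit_in n q" using assms by (auto simp: irreducible_in_def)
  have P: "homog n q \<in> polys (Suc n)" "homog n q \<noteq> 0" using q homog_polys homog_nonzero by auto
  have not_unit: "\<not> unit_in (Suc n) (homog n q)"
    using q unit_in_iff tdeg_homog by metis
  have "unit_in (Suc n) a \<or> unit_in (Suc n) b"
    if ab: "a \<in> polys (Suc n)" "b \<in> polys (Suc n)" "homog n q = a * b" for a b
  proof -
    have nz: "a \<noteq> 0" "b \<noteq> 0" using ab P by auto
    have "q = dehom n a * dehom n b" using ab(3) dehom_homog[OF q(1)] dehom_mult by metis
    then have "unit_in n (dehom n a) \<or> unit_in n (dehom n b)"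
      using assms ab dehom_polys unfolding irreducible_in_def by blast
    moreover have "homog n q = b * a" using ab(3) by (simp add: mult.commute)
    ultimately show ?thesis
      using unit_factor_of_homog[OF q(1,2) ab(3) ab(1) nz]
        unit_factor_of_homog[OF q(1,2) _ ab(2) nz(2,1)] by blast
  qed
  then show ?thesis using P not_unit unfolding irreducible_in_def by blast
qed

lemma factor_of_homog:
  assumes f: "f \<in> polys n" "f \<noteq> 0"
    and p: "p \<in> polys (Suc n)" "p \<noteq> 0" "dvd_in (Suc n) p (homog n f)"
  shows "homogeneous (tdeg p) p" "p = homog n (dehom n p)"
proof -
  obtain r where r: "homog n f = p * r" using p(3) by (auto simp: dvd_in_def)
  have "r \<noteq> 0" using r homog_nonzero[OF f] by auto
  then show hom: "homogeneous (tdeg p) p"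
    using homogeneous_factor[of "tdeg f" p r] homogeneous_homog[of f n] r p(2) by metis
  define k where "k = tdeg p - tdeg (dehom n p)"
  have pk: "p = var n ^ k * homog n (dehom n p)"
    unfolding k_def by (rule homogeneous_eq_var_power_homog[OF p(1) hom p(2)])
  have "k = 0"
  proof (rule ccontr)
    assume "k \<noteq> 0"
    have "homog n f = var n ^ k * (homog n (dehom n p) * r)" using r pk by (metis mult.assoc)
    then show False using homog_not_var_multiple[OF f] \<open>k \<noteq> 0\<close> by simp
  qed
  then show "p = homog n (dehom n p)" using pk by simp
qed

lemma irreducible_dehom:
  assumes p: "irreducible_in (Suc n) p" and p_eq: "p = homog n (dehom n p)"
  shows "irreducible_in n (dehom n p)"
proof -
  define q where "q = dehom n p"
  have pp: "p \<in> polys (Suc n)" "p \<noteq> 0" "\<not> unit_in (Suc n) p"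
    using p by (auto simp: irreducible_in_def)
  have q: "q \<in> polys n" "q \<noteq> 0" using pp p_eq dehom_polys unfolding q_def by fastforce+
  have not_unit: "\<not> unit_in n q"
    using pp q p_eq unit_in_iff tdeg_homog homog_polys unfolding q_def by metis
  have "unit_in n a \<or> unit_in n b" if ab: "a \<in> polys n" "b \<in> polys n" "q = a * b" for a b
  proof -
    have nz: "a \<noteq> 0" "b \<noteq> 0" using ab q by auto
    have "p = homog n a * homog n b" using p_eq ab homog_mult nz q_def by metis
    then have "unit_in (Suc n) (homog n a) \<or> unit_in (Suc n) (homog n b)"
      using p ab homog_polys unfolding irreducible_in_def by blast
    then show ?thesis using unit_in_iff tdeg_homog ab nz by metis
  qed
  then show ?thesis using q not_unit unfolding irreducible_in_def q_def by blast
qed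

lemma mult_in_homog:
  assumes q: "irreducible_in n q" and f: "f \<in> polys n" "f \<noteq> 0"
  shows "mult_in (Suc n) (homog n q) (homog n f) = mult_in n q f"
proof (rule antisym)
  have qq: "q \<in> polys n" "q \<noteq> 0" using q by (auto simp: irreducible_in_def)
  have F: "homog n f \<in> polys (Suc n)" "homog n f \<noteq> 0" using f homog_polys homog_nonzero by auto
  define e where "e = mult_in (Suc n) (homog n q) (homog n f)"
  have "dvd_in (Suc n) (homog n q ^ e) (homog n f)"
    unfolding e_def by (rule pow_mult_in_dvd[OF irreducible_homog[OF q] F])
  then have "dvd_in n (dehom n (homog n q ^ e)) (dehom n (homog n f))"
    by (rule dehom_dvd)
  then have "dvd_in n (q ^ e) f" by (simp add: dehom_power dehom_homog qq(1) f(1))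
  then show "e \<le> mult_in n q f" by (rule mult_in_ge[OF q f(2)])
  define e' where "e' = mult_in n q f"
  have "dvd_in n (q ^ e') f" unfolding e'_def by (rule pow_mult_in_dvd[OF q f])
  then have "dvd_in (Suc n) (homog n (q ^ e')) (homog n f)"
    using homog_dvd polys_power[OF qq(1)] f by blast
  then have "dvd_in (Suc n) (homog n q ^ e') (homog n f)" by (simp add: homog_power qq)
  then show "e' \<le> e" unfolding e_def by (rule mult_in_ge[OF irreducible_homog[OF q] F(2)])
qed

section \<open>Derivations\<close>

lemma pderiv_map_terms:
  "pderiv_m i p = map_terms (\<lambda>m. m - Poly_Mapping.single i 1) (\<lambda>m. of_nat (Poly_Mapping.lookup m i)) p"
  by (simp add: pderiv_m_def map_terms_def)

lemma homogeneous_pderiv: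
  fixes p :: "'k::field_char_0 mpoly"
  assumes "homogeneous D p"
  shows "homogeneous (D - 1) (pderiv_m i p)"
  unfolding homogeneous_def
proof
  fix k assume "k \<in> Poly_Mapping.keys (pderiv_m i p)"
  then obtain m where m: "m \<in> Poly_Mapping.keys p" "(of_nat (Poly_Mapping.lookup m i) :: 'k) \<noteq> 0"
     "k = m - Poly_Mapping.single i 1"
    using keys_map_terms[of "\<lambda>m. m - Poly_Mapping.single i 1"
        "\<lambda>m. (of_nat (Poly_Mapping.lookup m i) :: 'k)" p]
    unfolding pderiv_map_terms by blast
  then have "1 \<le> Poly_Mapping.lookup m i" by (metis less_one not_le of_nat_0)
  then show "mdeg k = D - 1"
    using m assms mdeg_minus_single by (metis homogeneous_def)
qed

lemma polys_pderiv: "p \<in> polys N \<Longrightarrow> pderiv_m i p \<in> polys N"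
  unfolding pderiv_map_terms
  by (rule polys_map_terms) (use keys_minus_monom in \<open>fastforce simp: polys_iff\<close>)

lemma dehom_pderiv: "i \<noteq> n \<Longrightarrow> dehom n (pderiv_m i P) = pderiv_m i (dehom n P)"
  unfolding dehom_def pderiv_map_terms map_terms_comp
  by (rule map_terms_cong)
    (auto intro!: poly_mapping_eqI simp: lookup_dehom_monom lookup_minus lookup_single when_def)

lemma der_apply_lincomb:
  "der_apply N (\<lambda>i. c * v i + w i) g = c * der_apply N v g + der_apply N w g"
  by (simp add: der_apply_def distrib_right sum.distrib sum_distrib_left mult.assoc)

lemma polys_der_apply: "a \<in> Der N \<Longrightarrow> g \<in> polys N \<Longrightarrow> der_apply N a g \<in> polys N"
  unfolding der_apply_def Der_def by (auto intro!: polys_sum polys_mult polys_pderiv)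

lemma dehom_der_apply:
  assumes "a n = 0"
  shows "dehom n (der_apply (Suc n) a P) = der_apply n (\<lambda>i. dehom n (a i)) (dehom n P)"
proof -
  have eq: "der_apply (Suc n) a P = der_apply n a P"
    using assms by (simp add: der_apply_def)
  show ?thesis unfolding eq unfolding der_apply_def by (simp add: dehom_sum dehom_mult dehom_pderiv)
qed

lemma hpart_der_apply:
  fixes g :: "'k::field_char_0 mpoly"
  assumes "homogeneous D g" "1 \<le> D"
  shows "hpart (d + D - 1) (der_apply N a g) = der_apply N (\<lambda>i. hpart d (a i)) g"
proof -
  have "D - 1 \<le> d + D - 1" "d + D - 1 - (D - 1) = d" using assms(2) by arith+
  then have "hpart (d + D - 1) (a i * pderiv_m i g) = hpart d (a i) * pderiv_m i g" for i
    using hpart_mult_homogeneous[OF homogeneous_pderiv[OF assms(1)], of "d + D - 1" "a i" i]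
    by simp
  then show ?thesis by (simp add: der_apply_def hpart_sum)
qed

lemma homogeneous_der_apply:
  fixes g :: "'k::field_char_0 mpoly"
  assumes "\<And>i. homogeneous E (a i)" "homogeneous D g" "1 \<le> D"
  shows "homogeneous (E + D - 1) (der_apply N a g)"
proof -
  have "homogeneous (E + (D - 1)) (a i * pderiv_m i g)" for i
    using homogeneous_mult[OF assms(1) homogeneous_pderiv[OF assms(2)]] .
  then show ?thesis
    unfolding der_apply_def using assms(3) by (intro homogeneous_sum) (simp add: add.commute)
qed

lemma Der_zero: "(\<lambda>_. 0) \<in> Der N"
  by (simp add: Der_def)

lemma Der_lincomb:
  "c \<in> polys N \<Longrightarrow> v \<in> Der N \<Longrightarrow> w \<in> Der N \<Longrightarrow> (\<lambda>i. c * v i + w i) \<in> Der N"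
  unfolding Der_def by (simp add: polys_add polys_mult)

lemma Dge_lincomb:
  assumes "c \<in> polys N" "v \<in> Dge N g e" "w \<in> Dge N g e"
  shows "(\<lambda>i. c * v i + w i) \<in> Dge N g e"
proof -
  obtain r1 where r1: "r1 \<in> polys N" "der_apply N v g = g ^ e * r1"
    using assms(2) by (auto simp: Dge_def dvd_in_def)
  obtain r2 where r2: "r2 \<in> polys N" "der_apply N w g = g ^ e * r2"
    using assms(3) by (auto simp: Dge_def dvd_in_def)
  have "der_apply N (\<lambda>i. c * v i + w i) g = g ^ e * (c * r1 + r2)"
    unfolding der_apply_lincomb r1 r2 by (simp add: algebra_simps)
  moreover have "c * r1 + r2 \<in> polys N" using assms r1 r2 by (intro polys_add polys_mult)
  moreover have "(\<lambda>i. c * v i + w i) \<in> Der N"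
    using assms Der_lincomb unfolding Dge_def by blast
  ultimately show ?thesis unfolding Dge_def dvd_in_def by blast
qed

lemma DF_zero: "(\<lambda>_. 0) \<in> DF N F"
  by (simp add: DF_def Dge_def Der_zero der_apply_def dvd_in_zero)

lemma DF_lincomb:
  assumes c: "c \<in> polys N" and v: "v \<in> DF N F" and w: "w \<in> DF N F"
  shows "(\<lambda>i. c * v i + w i) \<in> DF N F"
proof -
  have "(\<lambda>i. c * v i + w i) \<in> Der N"
    using v w unfolding DF_def by (auto intro: Der_lincomb[OF c])
  moreover have "(\<lambda>i. c * v i + w i) \<in> Dge N p (mult_in N p F)"
    if "irreducible_in N p" "dvd_in N p F" for p
  proof -
    have "v \<in> Dge N p (mult_in N p F)" "w \<in> Dge N p (mult_in N p F)"
      using v w that unfolding DF_def by auto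
    then show ?thesis by (rule Dge_lincomb[OF c])
  qed
  ultimately show ?thesis unfolding DF_def by blast
qed

section \<open>Homogenized derivations\<close>

definition der_deg :: "nat \<Rightarrow> (nat \<Rightarrow> 'k::field mpoly) \<Rightarrow> nat" where
  "der_deg n a = Max {tdeg (a i) | i. i < n \<and> a i \<noteq> 0}"

lemma der_homog_eq:
  "der_homog n a =
     (\<lambda>i. if a i = 0 then 0 else var n ^ (der_deg n a - tdeg (a i)) * homog n (a i))"
  unfolding der_homog_def der_deg_def Let_def by (rule refl)

lemma finite_der_degrees:
  fixes a :: "nat \<Rightarrow> 'k::field mpoly"
  shows "finite {tdeg (a i) | i. i < n \<and> a i \<noteq> 0}"
proof -
  have "{tdeg (a i) | i. i < n \<and> a i \<noteq> 0} \<subseteq> (\<lambda>i. tdeg (a i)) ` {..<n}" by auto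
  then show ?thesis by (rule finite_subset) simp
qed

lemma der_deg_ge: "i < n \<Longrightarrow> a i \<noteq> 0 \<Longrightarrow> tdeg (a i) \<le> der_deg n a"
  unfolding der_deg_def by (rule Max_ge[OF finite_der_degrees]) auto

lemma der_deg_attained:
  assumes "a \<in> Der n" "a \<noteq> (\<lambda>_. 0)"
  shows "\<exists>j<n. a j \<noteq> 0 \<and> der_deg n a = tdeg (a j)"
proof -
  obtain j where "a j \<noteq> 0" using assms(2) by auto
  then have "j < n" using assms(1) by (auto simp: Der_def not_le[symmetric])
  then have "{tdeg (a i) | i. i < n \<and> a i \<noteq> 0} \<noteq> {}" using \<open>a j \<noteq> 0\<close> by blast
  then have "der_deg n a \<in> {tdeg (a i) | i. i < n \<and> a i \<noteq> 0}"
    unfolding der_deg_def using Max_in[OF finite_der_degrees] by blast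
  then show ?thesis by auto
qed

lemma der_homog_Der: "a \<in> Der n \<Longrightarrow> der_homog n a \<in> Der (Suc n)"
  unfolding der_homog_eq Der_def
  by (auto intro!: polys_mult polys_power polys_var homog_polys)

lemma der_homog_last: "a \<in> Der n \<Longrightarrow> der_homog n a n = 0"
  unfolding der_homog_eq Der_def by simp

lemma homogeneous_der_homog:
  assumes "a \<in> Der n"
  shows "homogeneous (der_deg n a) (der_homog n a i)"
proof (cases "a i = 0")
  case False
  then have "i < n" using assms by (auto simp: Der_def not_le[symmetric])
  then have "tdeg (a i) \<le> der_deg n a" using der_deg_ge False by blast
  moreover have "homogeneous (der_deg n a - tdeg (a i) + tdeg (a i))
      (var n ^ (der_deg n a - tdeg (a i)) * homog n (a i))"
    by (rule homogeneous_mult[OF homogeneous_var_power homogeneous_homog])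
  ultimately show ?thesis using False by (simp add: der_homog_eq)
qed (simp add: der_homog_eq homogeneous_def)

lemma dehom_der_homog: "a \<in> Der n \<Longrightarrow> dehom n (der_homog n a i) = a i"
  unfolding der_homog_eq Der_def by (simp add: dehom_mult dehom_power dehom_homog)

section \<open>Logarithmic derivations along f and its homogenization\<close>

(* An irreducible factor of F is p = q^h with q an irreducible
  factor of f of the same multiplicity e; \<delta>^h(p) is homogeneous and dehomogenizes to \<delta>(q),
  which q^e divides, hence p^e = (q^e)^h divides \<delta>^h(p). *)
lemma der_homog_in_DF:
  fixes f :: "'k::field_char_0 mpoly"
  assumes f: "f \<in> polys n" "f \<noteq> 0" and \<delta>: "\<delta> \<in> DF n f"
  shows "der_homog n \<delta> \<in> DF (Suc n) (homog n f)"
proof -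
  have \<delta>_Der: "\<delta> \<in> Der n" using \<delta> by (simp add: DF_def)
  have "der_homog n \<delta> \<in> Dge (Suc n) p (mult_in (Suc n) p (homog n f))"
    if p: "irreducible_in (Suc n) p" "dvd_in (Suc n) p (homog n f)" for p
  proof -
    define q where "q = dehom n p"
    have pp: "p \<in> polys (Suc n)" "p \<noteq> 0" using p by (auto simp: irreducible_in_def)
    have hom_p: "homogeneous (tdeg p) p" using factor_of_homog(1)[OF f pp p(2)] .
    have p_eq: "p = homog n q" unfolding q_def by (rule factor_of_homog(2)[OF f pp p(2)])
    have "irreducible_in n q"
      unfolding q_def by (rule irreducible_dehom[OF p(1) factor_of_homog(2)[OF f pp p(2)]])
    moreover have "dvd_in n q f"
      using dehom_dvd[OF p(2)] by (simp add: q_def dehom_homog f(1))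
    ultimately have q: "irreducible_in n q" "dvd_in n q f" by blast+
    have qq: "q \<in> polys n" "q \<noteq> 0" using q(1) by (auto simp: irreducible_in_def)
    have qe: "q ^ mult_in n q f \<in> polys n" "q ^ mult_in n q f \<noteq> 0"
      using q(1) by (auto simp: irreducible_in_def polys_power)
    let ?P = "der_apply (Suc n) (der_homog n \<delta>) p"
    have "dvd_in n (q ^ mult_in n q f) (der_apply n \<delta> q)"
      using \<delta> q unfolding DF_def Dge_def by blast
    moreover have "dehom n ?P = der_apply n \<delta> q"
      using dehom_der_apply[of "der_homog n \<delta>", OF der_homog_last[OF \<delta>_Der]] by (simp add: dehom_der_homog[OF \<delta>_Der] q_def)
    ultimately have "dvd_in n (q ^ mult_in n q f) (dehom n ?P)" by simp
    then have "dvd_in (Suc n) (homog n (q ^ mult_in n q f)) ?P"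
      using homog_dvd_of_dehom_dvd[OF polys_der_apply[OF der_homog_Der[OF \<delta>_Der] pp(1)]
          homogeneous_der_apply[OF homogeneous_der_homog[OF \<delta>_Der] hom_p irreducible_tdeg_pos[OF p(1)]]
          qe]
      by blast
    moreover have "homog n (q ^ mult_in n q f) = p ^ mult_in (Suc n) p (homog n f)"
      using mult_in_homog[OF q(1) f] homog_power[OF qq] p_eq by simp
    ultimately show ?thesis using der_homog_Der[OF \<delta>_Der] by (simp add: Dge_def)
  qed
  then show ?thesis using der_homog_Der[OF \<delta>_Der] unfolding DF_def by blast
qed

(* Irreducible factors p of F are homogeneous, so the component of
  degree d + deg p - 1 of \<theta>(p) = p^e r is \<theta>_d(p) on the one hand and p^e times a homogeneous
  component of r on the other. *)
lemma hpart_in_DF: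
  fixes f :: "'k::field_char_0 mpoly"
  assumes f: "f \<in> polys n" "f \<noteq> 0" and \<theta>: "\<theta> \<in> DF (Suc n) (homog n f)"
  shows "(\<lambda>i. hpart d (\<theta> i)) \<in> DF (Suc n) (homog n f)"
proof -
  let ?\<theta>d = "\<lambda>i. hpart d (\<theta> i)"
  have \<theta>d_Der: "?\<theta>d \<in> Der (Suc n)" using \<theta> by (simp add: DF_def Der_def polys_hpart)
  have "?\<theta>d \<in> Dge (Suc n) p e"
    if p: "irreducible_in (Suc n) p" "dvd_in (Suc n) p (homog n f)"
      and e: "e = mult_in (Suc n) p (homog n f)" for p e
  proof -
    have "dvd_in (Suc n) (p ^ e) (der_apply (Suc n) \<theta> p)"
      using \<theta> p e unfolding DF_def Dge_def by blast
    then obtain r where r: "r \<in> polys (Suc n)" "der_apply (Suc n) \<theta> p = r * p ^ e"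
      by (auto simp: dvd_in_def mult.commute)
    have pp: "p \<in> polys (Suc n)" "p \<noteq> 0" using p by (auto simp: irreducible_in_def)
    have hom_p: "homogeneous (tdeg p) p" using factor_of_homog(1)[OF f pp p(2)] .
    define k where "k = d + tdeg p - 1"
    have "der_apply (Suc n) ?\<theta>d p = hpart k (der_apply (Suc n) \<theta> p)"
      unfolding k_def by (rule hpart_der_apply[OF hom_p irreducible_tdeg_pos[OF p(1)], symmetric])
    also have "\<dots> = hpart k (r * p ^ e)" using r(2) by simp
    also have "\<dots> = (if e * tdeg p \<le> k then hpart (k - e * tdeg p) r * p ^ e else 0)"
      by (rule hpart_mult_homogeneous[OF homogeneous_power[OF hom_p]])
    finally have "dvd_in (Suc n) (p ^ e) (der_apply (Suc n) ?\<theta>d p)"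
      using polys_hpart[OF r(1)] by (auto simp: dvd_in_def dvd_in_zero mult.commute)
    then show ?thesis using \<theta>d_Der by (simp add: Dge_def)
  qed
  then show ?thesis using \<theta>d_Der unfolding DF_def by blast
qed

lemma dehom_Der:
  assumes "\<theta> \<in> Der (Suc n)" "\<theta> n = 0"
  shows "(\<lambda>i. dehom n (\<theta> i)) \<in> Der n"
proof -
  have "\<theta> i = 0" if "n \<le> i" for i
    using assms that by (cases "i = n") (auto simp: Der_def)
  then show ?thesis using assms dehom_polys by (auto simp: Der_def)
qed

(* For an irreducible factor q of f, p = q^h is an irreducible factor of F of the same
  multiplicity e, and p^e | \<theta>(p) dehomogenizes to q^e | \<delta>(q). *)
lemma dehom_der_in_DF:
  assumes f: "f \<in> polys n" "f \<noteq> 0" and \<theta>: "\<theta> \<in> DF (Suc n) (homog n f)" "\<theta> n = 0"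
  shows "(\<lambda>i. dehom n (\<theta> i)) \<in> DF n f"
proof -
  define \<delta> where "\<delta> = (\<lambda>i. dehom n (\<theta> i))"
  have "\<theta> \<in> Der (Suc n)" using \<theta>(1) by (simp add: DF_def)
  then have \<delta>_Der: "\<delta> \<in> Der n" unfolding \<delta>_def using dehom_Der \<theta>(2) by blast
  have "\<delta> \<in> Dge n q (mult_in n q f)" if q: "irreducible_in n q" "dvd_in n q f" for q
  proof -
    have qq: "q \<in> polys n" using q by (simp add: irreducible_in_def)
    define e where "e = mult_in n q f"
    have "dvd_in (Suc n) (homog n q) (homog n f)" using homog_dvd[OF qq f q(2)] .
    then have "dvd_in (Suc n) (homog n q ^ e) (der_apply (Suc n) \<theta> (homog n q))"
      using \<theta>(1) irreducible_homog[OF q(1)] mult_in_homog[OF q(1) f]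
      unfolding DF_def Dge_def e_def by auto
    then have "dvd_in n (dehom n (homog n q ^ e)) (dehom n (der_apply (Suc n) \<theta> (homog n q)))"
      by (rule dehom_dvd)
    then have "dvd_in n (q ^ e) (der_apply n \<delta> q)"
      by (simp add: dehom_power dehom_homog qq dehom_der_apply[of \<theta>, OF \<theta>(2)] \<delta>_def)
    then show ?thesis using \<delta>_Der by (simp add: Dge_def e_def)
  qed
  then show ?thesis using \<delta>_Der unfolding DF_def \<delta>_def by blast
qed

(* Step (4b): a nonzero derivation of S^h without \<partial>_h-component whose coefficients are all
  homogeneous of degree d equals h^k \<delta>^h for its dehomogenization \<delta>, since each coefficient
  is h^(d - deg \<delta>_i) \<delta>_i^h. *)
lemma homogeneous_der_eq_var_power_der_homog:
  assumes \<theta>: "\<theta> \<in> Der (Suc n)" "\<theta> n = 0" "\<And>i. homogeneous d (\<theta> i)"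
  defines "\<delta> \<equiv> \<lambda>i. dehom n (\<theta> i)"
  shows "\<theta> = (\<lambda>i. var n ^ (d - der_deg n \<delta>) * der_homog n \<delta> i)"
proof
  fix i
  have \<delta>_Der: "\<delta> \<in> Der n" unfolding \<delta>_def using dehom_Der[OF \<theta>(1,2)] .
  have nonzero_iff: "\<delta> j = 0 \<longleftrightarrow> \<theta> j = 0" for j
    using dehom_nonzero[OF \<theta>(3), of j n] unfolding \<delta>_def by (cases "\<theta> j = 0") simp_all
  show "\<theta> i = var n ^ (d - der_deg n \<delta>) * der_homog n \<delta> i"
  proof (cases "\<delta> i = 0")
    case True
    then show ?thesis using nonzero_iff by (simp add: der_homog_eq)
  next
    case False
    then have "\<delta> \<noteq> (\<lambda>_. 0)" by auto
    then obtain j where j: "j < n" "\<delta> j \<noteq> 0" "der_deg n \<delta> = tdeg (\<delta> j)"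
      using der_deg_attained[OF \<delta>_Der] by blast
    have "\<theta> j \<noteq> 0" using j(2) nonzero_iff by simp
    then have "tdeg (\<delta> j) \<le> d" unfolding \<delta>_def by (rule tdeg_dehom_le[OF \<theta>(3)])
    then have deg_le: "der_deg n \<delta> \<le> d" using j(3) by simp
    have "i < n"
    proof (rule ccontr)
      assume "\<not> i < n"
      then show False using False \<delta>_Der by (simp add: Der_def)
    qed
    then have deg_i: "tdeg (\<delta> i) \<le> der_deg n \<delta>" using der_deg_ge False by blast
    have "\<theta> i \<in> polys (Suc n)" "\<theta> i \<noteq> 0" using \<theta>(1) False nonzero_iff by (simp_all add: Der_def)
    then have "\<theta> i = var n ^ (d - tdeg (\<delta> i)) * homog n (\<delta> i)"
      unfolding \<delta>_def by (rule homogeneous_eq_var_power_homog[OF _ \<theta>(3)])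
    also have "\<dots> = var n ^ (d - der_deg n \<delta>) * (var n ^ (der_deg n \<delta> - tdeg (\<delta> i)) * homog n (\<delta> i))"
      using deg_le deg_i by (simp add: mult.assoc power_add[symmetric])
    finally show ?thesis using False by (simp add: der_homog_eq)
  qed
qed

lemma Der_hpart_decomp:
  assumes "\<theta> \<in> Der N"
  obtains S where "finite S" "\<theta> = (\<lambda>i. \<Sum>d\<in>S. hpart d (\<theta> i))"
proof
  let ?S = "\<Union>i<N. mdeg ` Poly_Mapping.keys (\<theta> i)"
  show "finite ?S" by auto
  show "\<theta> = (\<lambda>i. \<Sum>d\<in>?S. hpart d (\<theta> i))"
  proof
    fix i
    show "\<theta> i = (\<Sum>d\<in>?S. hpart d (\<theta> i))"
    proof (cases "i < N")
      case True
      then show ?thesis by (intro hpart_decomp) auto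
    next
      case False
      then show ?thesis using assms by (simp add: Der_def)
    qed
  qed
qed

section \<open>Generated submodules\<close>

lemma submod_gen_least:
  assumes "(\<lambda>_. 0) \<in> M" "\<And>c v w. c \<in> R \<Longrightarrow> v \<in> M \<Longrightarrow> w \<in> M \<Longrightarrow> (\<lambda>i. c * v i + w i) \<in> M"
    and "G \<subseteq> M"
  shows "submod_gen R G \<subseteq> M"
proof
  fix x assume "x \<in> submod_gen R G"
  then show "x \<in> M" by induction (use assms in auto)
qed

lemma submod_gen_add:
  assumes "v \<in> submod_gen R G" "w \<in> submod_gen R G"
  shows "(\<lambda>i. v i + w i) \<in> submod_gen R G"
  using assms
proof (induction v rule: submod_gen.induct)
  case zero
  then show ?case by simp
next
  case (add c g v)
  then have "(\<lambda>i. c * g i + (v i + w i)) \<in> submod_gen R G" by (intro submod_gen.add)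
  then show ?case by (simp add: add.assoc)
qed

lemma submod_gen_scaled_gen: "c \<in> R \<Longrightarrow> g \<in> G \<Longrightarrow> (\<lambda>i. c * g i) \<in> submod_gen R G"
  using submod_gen.add[OF _ _ submod_gen.zero] by simp

lemma submod_gen_sum:
  "finite A \<Longrightarrow> (\<And>d. d \<in> A \<Longrightarrow> v d \<in> submod_gen R G) \<Longrightarrow> (\<lambda>i. \<Sum>d\<in>A. v d i) \<in> submod_gen R G"
proof (induction A rule: finite_induct)
  case empty
  then show ?case using submod_gen.zero by simp
next
  case (insert d A)
  then show ?case using submod_gen_add[of "v d" R G "\<lambda>i. \<Sum>d\<in>A. v d i"] by simp
qed

(* The inclusion D(F) \<inter> S^h<\<partial>_x> \<subseteq> D(f)^h: each homogeneous component of \<theta> lies in D(F) by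
  step (3) and is either zero or h^k \<delta>^h with \<delta> \<in> D(f) by step (4). *)
lemma DF_homog_in_span:
  fixes f :: "'k::field_char_0 mpoly"
  assumes f: "f \<in> polys n" "f \<noteq> 0" and \<theta>: "\<theta> \<in> DF (Suc n) (homog n f)" "\<theta> n = 0"
  shows "\<theta> \<in> submod_gen (polys (Suc n)) (der_homog n ` {a \<in> DF n f. a \<noteq> (\<lambda>_. 0)})"
proof -
  let ?span = "submod_gen (polys (Suc n)) (der_homog n ` {a \<in> DF n f. a \<noteq> (\<lambda>_. 0)})"
  have "(\<lambda>i. hpart d (\<theta> i)) \<in> ?span" for d
  proof (cases "(\<lambda>i. hpart d (\<theta> i)) = (\<lambda>_. 0)")
    case True
    then show ?thesis using submod_gen.zero by simp
  next
    case False
    let ?\<theta>d = "\<lambda>i. hpart d (\<theta> i)"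
    define \<delta> where "\<delta> = (\<lambda>i. dehom n (?\<theta>d i))"
    have \<theta>d: "?\<theta>d \<in> DF (Suc n) (homog n f)" "?\<theta>d n = 0"
      using hpart_in_DF[OF f \<theta>(1)] \<theta>(2) by simp_all
    then have \<theta>d_Der: "?\<theta>d \<in> Der (Suc n)" by (simp add: DF_def)
    have \<theta>d_eq: "?\<theta>d = (\<lambda>i. var n ^ (d - der_deg n \<delta>) * der_homog n \<delta> i)"
      unfolding \<delta>_def
      by (rule homogeneous_der_eq_var_power_der_homog[OF \<theta>d_Der \<theta>d(2) homogeneous_hpart])
    have "\<delta> \<in> DF n f" unfolding \<delta>_def by (rule dehom_der_in_DF[OF f \<theta>d])
    moreover have "\<delta> \<noteq> (\<lambda>_. 0)" using False \<theta>d_eq by (auto simp: der_homog_eq)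
    ultimately show ?thesis
      by (subst \<theta>d_eq) (auto intro!: submod_gen_scaled_gen polys_power polys_var)
  qed
  moreover obtain S where S: "finite S" "\<theta> = (\<lambda>i. \<Sum>d\<in>S. hpart d (\<theta> i))"
    using Der_hpart_decomp \<theta>(1) unfolding DF_def by blast
  ultimately show ?thesis by (subst S(2)) (rule submod_gen_sum[OF S(1)])
qed

theorem mainTheorem13:
  fixes n :: nat and f :: "'k::field_char_0 mpoly"
  assumes "f \<in> polys n" and "f \<noteq> 0"
  shows "DF (Suc n) (homog n f) \<inter> {a \<in> Der (Suc n). a n = 0}
         = submod_gen (polys (Suc n)) (der_homog n ` {a \<in> DF n f. a \<noteq> (\<lambda>_. 0)})"
proof
  show "DF (Suc n) (homog n f) \<inter> {a \<in> Der (Suc n). a n = 0}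
      \<subseteq> submod_gen (polys (Suc n)) (der_homog n ` {a \<in> DF n f. a \<noteq> (\<lambda>_. 0)})"
    using DF_homog_in_span[OF assms] by blast
  show "submod_gen (polys (Suc n)) (der_homog n ` {a \<in> DF n f. a \<noteq> (\<lambda>_. 0)})
      \<subseteq> DF (Suc n) (homog n f) \<inter> {a \<in> Der (Suc n). a n = 0}"
  proof (rule submod_gen_least)
    show "(\<lambda>_. 0) \<in> DF (Suc n) (homog n f) \<inter> {a \<in> Der (Suc n). a n = 0}"
      using DF_zero[of "Suc n" "homog n f"] Der_zero[of "Suc n"] by simp
    show "(\<lambda>i. c * v i + w i) \<in> DF (Suc n) (homog n f) \<inter> {a \<in> Der (Suc n). a n = 0}"
      if "c \<in> polys (Suc n)" "v \<in> DF (Suc n) (homog n f) \<inter> {a \<in> Der (Suc n). a n = 0}"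
        "w \<in> DF (Suc n) (homog n f) \<inter> {a \<in> Der (Suc n). a n = 0}" for c v w
      using that DF_lincomb[of c "Suc n" v "homog n f" w] Der_lincomb[of c "Suc n" v w] by auto
    show "der_homog n ` {a \<in> DF n f. a \<noteq> (\<lambda>_. 0)}
        \<subseteq> DF (Suc n) (homog n f) \<inter> {a \<in> Der (Suc n). a n = 0}"
      using der_homog_in_DF[OF assms] der_homog_Der der_homog_last by (auto simp: DF_def)
  qed
qed

end
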